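(* Let $\Phi$ be the set of formulas of $NOM$, let $\mathcal Q$ be an orthomodular lattice, and let $[\![\cdot]\!]:\Phi\to\mathcal Q$ be a surjective interpretation. If every rule of inference of $NOM$ is sound in this interpretation, then for all formulas $\phi,\psi$: $[\![\phi\wedge\psi]\!]=[\![\phi]\!]\wedge[\![\psi]\!]$, $[\![\phi\rightarrow\psi]\!]=[\![\phi]\!]\rightarrow[\![\psi]\!]$ (Sasaki arrow), and $[\![\neg\phi]\!]=\neg[\![\phi]\!]$.
   Context: The propositional deductive system $NOM$: formulas are built from propositional letters using $\wedge$, $\rightarrow$, $\neg$. Sequents are $\phi_1,\ldots,\phi_n\vdash\psi$ ($n\ge0$) with antecedent a finite ordered sequence. With $\Gamma$ a finite possibly empty sequence of formulas and $\phi,\psi,\chi$ formulas, the rules of $NOM$ are: (assumption) $\Gamma,\phi\vdash\phi$; (cut) $\Gamma\vdash\phi$, $\Gamma,\phi\vdash\psi$ $\Rightarrow$ $\Gamma\vdash\psi$; (paste) $\Gamma\vdash\phi$, $\Gamma\vdash\psi$ $\Rightarrow$ $\Gamma,\phi\vdash\psi$; (compatible exchange) $\Gamma,\phi,\psi\vdash\phi$, $\Gamma,\phi,\psi\vdash\chi$, $\Gamma,\psi,\phi\vdash\psi$ $\Rightarrow$ $\Gamma,\psi,\phi\vdash\chi$; ($\wedge$-intro) $\Gamma\vdash\phi$, $\Gamma\vdash\psi$ $\Rightarrow$ $\Gamma\vdash\phi\wedge\psi$; ($\wedge$-elim) $\Gamma\vdash\phi\wedge\psi$ $\Rightarrow$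 $\Gamma\vdash\phi$ and $\Rightarrow$ $\Gamma\vdash\psi$; ($\rightarrow$-intro) $\Gamma,\phi\vdash\psi$ $\Rightarrow$ $\Gamma\vdash\phi\rightarrow\psi$; ($\rightarrow$-elim) $\Gamma\vdash\phi\rightarrow\psi$ $\Rightarrow$ $\Gamma,\phi\vdash\psi$; (excluded middle) $\Gamma,\phi\vdash\psi$, $\Gamma,\neg\phi\vdash\psi$ $\Rightarrow$ $\Gamma\vdash\psi$; (explosion) $\Gamma\vdash\neg\phi$ $\Rightarrow$ $\Gamma,\phi\vdash\psi$. An orthomodular lattice is a bounded lattice with an order-reversing involution $\neg$ satisfying $a\wedge\neg a=\bot$, $a\vee\neg a=\top$, and $a\le b\Rightarrow a\vee(\neg a\wedge b)=b$. In it, $a\mathbin{\&}b=(a\vee\neg b)\wedge b$ and $a\rightarrow b=\neg a\vee(a\wedge b)$; $\&$ associates to the left and $a_1\mathbin{\&}\cdots\mathbin{\&}a_n=\top$ when $n=0$. An interpretation is any function $[\![\cdot]\!]:\Phi\to\mathcal Q$ into an orthomodular lattice. A sequent $\phi_1,\ldots,\phi_n\vdash\psi$ is true in it if $[\![\phi_1]\!]\mathbin{\&}\cdots\mathbin{\&}[\![\phi_n]\!]\le[\![\psi]\!]$; a rule of inference is sound if, in every instance, its conclusion is true whenever all its premises are true. *)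

theory Defs
  imports Main
begin

class orthomodular_lattice = bounded_lattice + uminus +
  assumes compl_antimono: "x \<le> y \<Longrightarrow> - y \<le> - x"
    and compl_involution: "- (- x) = x"
    and inf_compl_bot: "inf x (- x) = bot"
    and sup_compl_top: "sup x (- x) = top"
    and orthomodular: "x \<le> y \<Longrightarrow> sup x (inf (- x) y) = y"

context orthomodular_lattice
begin

definition sasaki_and :: "'a \<Rightarrow> 'a \<Rightarrow> 'a" where
  "sasaki_and a b = inf (sup a (- b)) b"

definition sasaki_imp :: "'a \<Rightarrow> 'a \<Rightarrow> 'a" where
  "sasaki_imp a b = sup (- a) (inf a b)"

fun sasaki_and_list :: "'a list \<Rightarrow> 'a" where
  "sasaki_and_list [] = top"
| "sasaki_and_list (a # as) = foldl sasaki_and a as"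

end

datatype 'p form =
    Letter 'p
  | FAnd "'p form" "'p form"
  | FImp "'p form" "'p form"
  | FNeg "'p form"

definition seq_true :: "('p form \<Rightarrow> 'a::orthomodular_lattice) \<Rightarrow> 'p form list \<Rightarrow> 'p form \<Rightarrow> bool" where
  "seq_true I \<Gamma> \<psi> \<longleftrightarrow> sasaki_and_list (map I \<Gamma>) \<le> I \<psi>"

definition sound_assumption :: "('p form \<Rightarrow> 'a::orthomodular_lattice) \<Rightarrow> bool" where
  "sound_assumption I \<longleftrightarrow> (\<forall>\<Gamma> \<phi>. seq_true I (\<Gamma> @ [\<phi>]) \<phi>)"

definition sound_cut :: "('p form \<Rightarrow> 'a::orthomodular_lattice) \<Rightarrow> bool" where
  "sound_cut I \<longleftrightarrow> (\<forall>\<Gamma> \<phi> \<psi>. seq_true I \<Gamma> \<phi> \<longrightarrow> seq_true I (\<Gamma> @ [\<phi>]) \<psi> \<longrightarrow> seq_true I \<Gamma> \<psi>)"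

definition sound_paste :: "('p form \<Rightarrow> 'a::orthomodular_lattice) \<Rightarrow> bool" where
  "sound_paste I \<longleftrightarrow> (\<forall>\<Gamma> \<phi> \<psi>. seq_true I \<Gamma> \<phi> \<longrightarrow> seq_true I \<Gamma> \<psi> \<longrightarrow> seq_true I (\<Gamma> @ [\<phi>]) \<psi>)"

definition sound_compat_exchange :: "('p form \<Rightarrow> 'a::orthomodular_lattice) \<Rightarrow> bool" where
  "sound_compat_exchange I \<longleftrightarrow> (\<forall>\<Gamma> \<phi> \<psi> \<chi>.
     seq_true I (\<Gamma> @ [\<phi>, \<psi>]) \<phi> \<longrightarrow> seq_true I (\<Gamma> @ [\<phi>, \<psi>]) \<chi> \<longrightarrow>
     seq_true I (\<Gamma> @ [\<psi>, \<phi>]) \<psi> \<longrightarrow> seq_true I (\<Gamma> @ [\<psi>, \<phi>]) \<chi>)"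

definition sound_and_intro :: "('p form \<Rightarrow> 'a::orthomodular_lattice) \<Rightarrow> bool" where
  "sound_and_intro I \<longleftrightarrow> (\<forall>\<Gamma> \<phi> \<psi>. seq_true I \<Gamma> \<phi> \<longrightarrow> seq_true I \<Gamma> \<psi> \<longrightarrow> seq_true I \<Gamma> (FAnd \<phi> \<psi>))"

definition sound_and_elim :: "('p form \<Rightarrow> 'a::orthomodular_lattice) \<Rightarrow> bool" where
  "sound_and_elim I \<longleftrightarrow> (\<forall>\<Gamma> \<phi> \<psi>. seq_true I \<Gamma> (FAnd \<phi> \<psi>) \<longrightarrow> seq_true I \<Gamma> \<phi> \<and> seq_true I \<Gamma> \<psi>)"

definition sound_imp_intro :: "('p form \<Rightarrow> 'a::orthomodular_lattice) \<Rightarrow> bool" where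
  "sound_imp_intro I \<longleftrightarrow> (\<forall>\<Gamma> \<phi> \<psi>. seq_true I (\<Gamma> @ [\<phi>]) \<psi> \<longrightarrow> seq_true I \<Gamma> (FImp \<phi> \<psi>))"

definition sound_imp_elim :: "('p form \<Rightarrow> 'a::orthomodular_lattice) \<Rightarrow> bool" where
  "sound_imp_elim I \<longleftrightarrow> (\<forall>\<Gamma> \<phi> \<psi>. seq_true I \<Gamma> (FImp \<phi> \<psi>) \<longrightarrow> seq_true I (\<Gamma> @ [\<phi>]) \<psi>)"

definition sound_excluded_middle :: "('p form \<Rightarrow> 'a::orthomodular_lattice) \<Rightarrow> bool" where
  "sound_excluded_middle I \<longleftrightarrow> (\<forall>\<Gamma> \<phi> \<psi>. seq_true I (\<Gamma> @ [\<phi>]) \<psi> \<longrightarrow> seq_true I (\<Gamma> @ [FNeg \<phi>]) \<psi> \<longrightarrow> seq_true I \<Gamma> \<psi>)"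

definition sound_explosion :: "('p form \<Rightarrow> 'a::orthomodular_lattice) \<Rightarrow> bool" where
  "sound_explosion I \<longleftrightarrow> (\<forall>\<Gamma> \<phi> \<psi>. seq_true I \<Gamma> (FNeg \<phi>) \<longrightarrow> seq_true I (\<Gamma> @ [\<phi>]) \<psi>)"

definition all_rules_sound :: "('p form \<Rightarrow> 'a::orthomodular_lattice) \<Rightarrow> bool" where
  "all_rules_sound I \<longleftrightarrow> sound_assumption I \<and> sound_cut I \<and> sound_paste I \<and>
     sound_compat_exchange I \<and> sound_and_intro I \<and> sound_and_elim I \<and>
     sound_imp_intro I \<and> sound_imp_elim I \<and> sound_excluded_middle I \<and> sound_explosion I"

end

theory Submission
  imports Defs
begin

text \<open>Since the interpretation is surjective, every lattice element is the value of some formula,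
so each sound rule becomes a statement about arbitrary lattice elements. Elimination rules, applied
to the trivially true sequent with the compound formula on both sides, bound its value from above;
introduction rules, applied to a formula denoting the intended value, bound it from below. For
implication this works because the Sasaki arrow is right adjoint to the Sasaki conjunction. For
negation, explosion gives \<open>\<not>\<phi> & \<phi> = \<bottom>\<close> and excluded middle gives
\<open>\<phi> \<or> \<not>\<phi> = \<top>\<close>, and in an orthomodular lattice these two equations
characterise the orthocomplement.\<close>

context orthomodular_lattice
begin

lemma compl_le_swap: "- x \<le> y \<Longrightarrow> - y \<le> x"
  by (metis compl_antimono compl_involution)

lemma compl_sup: "- (sup x y) = inf (- x) (- y)"
proof (rule order.antisym)
  show "- sup x y \<le> inf (- x) (- y)"
    by (simp add: compl_antimono)
  have "x \<le> - inf (- x) (- y)" and "y \<le> - inf (- x) (- y)"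
    by (metis compl_le_swap compl_involution inf_le1, metis compl_le_swap compl_involution inf_le2)
  then have "sup x y \<le> - inf (- x) (- y)"
    by simp
  then show "inf (- x) (- y) \<le> - sup x y"
    by (metis compl_le_swap compl_involution)
qed

lemma compl_inf: "- (inf x y) = sup (- x) (- y)"
  by (metis compl_sup compl_involution)

lemma compl_top: "- top = bot"
  by (metis inf_compl_bot inf_top_left)

lemma orthomodular_dual:
  assumes "x \<le> y"
  shows "inf y (sup (- y) x) = x"
proof -
  have "sup (- y) (inf y (- x)) = - x"
    using orthomodular[OF compl_antimono[OF assms]] by (simp add: compl_involution)
  then show ?thesis
    by (metis compl_sup compl_inf compl_involution)
qed

lemma sup_compl_absorb: "sup (- a) (inf a (sup m (- a))) = sup m (- a)"
  using orthomodular[of "- a" "sup m (- a)"] by (simp add: compl_involution)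

lemma sasaki_and_le_iff_le_sasaki_imp: "sasaki_and m a \<le> b \<longleftrightarrow> m \<le> sasaki_imp a b"
proof
  assume "sasaki_and m a \<le> b"
  then have "inf a (sup m (- a)) \<le> inf a b"
    by (simp add: sasaki_and_def inf_commute)
  then have "sup (- a) (inf a (sup m (- a))) \<le> sasaki_imp a b"
    unfolding sasaki_imp_def using sup_mono by blast
  then show "m \<le> sasaki_imp a b"
    by (simp add: sup_compl_absorb)
next
  assume "m \<le> sasaki_imp a b"
  then have "sup m (- a) \<le> sup (- a) (inf a b)"
    by (simp add: sasaki_imp_def)
  then have "inf a (sup m (- a)) \<le> inf a (sup (- a) (inf a b))"
    using inf_mono by blast
  also have "\<dots> = inf a b"
    by (rule orthomodular_dual) simp
  finally show "sasaki_and m a \<le> b"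
    by (simp add: sasaki_and_def inf_commute)
qed

lemma eq_compl_if_sasaki_and_bot_sup_top:
  assumes "sasaki_and n a = bot" and "sup a n = top"
  shows "n = - a"
proof -
  have "- a = sup n (- a)"
    using sup_compl_absorb[of a n] assms(1) by (simp add: sasaki_and_def inf_commute)
  then have "n \<le> - a"
    by (metis sup.cobounded1)
  then have "sup n (inf (- n) (- a)) = - a"
    by (rule orthomodular)
  moreover have "inf (- n) (- a) = bot"
    using assms(2) by (metis compl_sup compl_top sup_commute)
  ultimately show ?thesis
    by simp
qed

end

lemma seq_true_Nil: "seq_true I [] \<psi> \<longleftrightarrow> I \<psi> = top"
  by (simp add: seq_true_def top_unique)

lemma seq_true_singleton: "seq_true I [\<gamma>] \<psi> \<longleftrightarrow> I \<gamma> \<le> I \<psi>"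
  by (simp add: seq_true_def)

lemma seq_true_pair: "seq_true I [\<gamma>, \<phi>] \<psi> \<longleftrightarrow> sasaki_and (I \<gamma>) (I \<phi>) \<le> I \<psi>"
  by (simp add: seq_true_def)

lemma interp_FAnd:
  assumes "surj I" and "sound_and_intro I" and "sound_and_elim I"
  shows "I (FAnd \<phi> \<psi>) = inf (I \<phi>) (I \<psi>)"
proof (rule order.antisym)
  have "seq_true I [FAnd \<phi> \<psi>] \<phi>" and "seq_true I [FAnd \<phi> \<psi>] \<psi>"
    using assms(3)[unfolded sound_and_elim_def, rule_format, of "[FAnd \<phi> \<psi>]" \<phi> \<psi>]
    by (simp_all add: seq_true_singleton)
  then show "I (FAnd \<phi> \<psi>) \<le> inf (I \<phi>) (I \<psi>)"
    by (simp add: seq_true_singleton)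
next
  obtain \<gamma> where \<gamma>: "I \<gamma> = inf (I \<phi>) (I \<psi>)"
    using assms(1) by (metis surjD)
  have "seq_true I [\<gamma>] (FAnd \<phi> \<psi>)"
    using assms(2)[unfolded sound_and_intro_def, rule_format, of "[\<gamma>]" \<phi> \<psi>]
    by (simp add: seq_true_singleton \<gamma>)
  then show "inf (I \<phi>) (I \<psi>) \<le> I (FAnd \<phi> \<psi>)"
    by (simp add: seq_true_singleton \<gamma>)
qed

lemma interp_FImp:
  assumes "surj I" and "sound_imp_intro I" and "sound_imp_elim I"
  shows "I (FImp \<phi> \<psi>) = sasaki_imp (I \<phi>) (I \<psi>)"
proof (rule order.antisym)
  have "seq_true I [FImp \<phi> \<psi>, \<phi>] \<psi>"
    using assms(3)[unfolded sound_imp_elim_def, rule_format, of "[FImp \<phi> \<psi>]" \<phi> \<psi>]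
    by (simp add: seq_true_singleton)
  then show "I (FImp \<phi> \<psi>) \<le> sasaki_imp (I \<phi>) (I \<psi>)"
    by (simp add: seq_true_pair sasaki_and_le_iff_le_sasaki_imp)
next
  obtain \<gamma> where \<gamma>: "I \<gamma> = sasaki_imp (I \<phi>) (I \<psi>)"
    using assms(1) by (metis surjD)
  have "seq_true I [\<gamma>, \<phi>] \<psi>"
    by (simp add: seq_true_pair \<gamma> sasaki_and_le_iff_le_sasaki_imp)
  then have "seq_true I [\<gamma>] (FImp \<phi> \<psi>)"
    using assms(2)[unfolded sound_imp_intro_def, rule_format, of "[\<gamma>]" \<phi> \<psi>] by simp
  then show "sasaki_imp (I \<phi>) (I \<psi>) \<le> I (FImp \<phi> \<psi>)"
    by (simp add: seq_true_singleton \<gamma>)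
qed

lemma interp_FNeg:
  assumes "surj I" and "sound_excluded_middle I" and "sound_explosion I"
  shows "I (FNeg \<phi>) = - I \<phi>"
proof (rule eq_compl_if_sasaki_and_bot_sup_top)
  obtain \<beta> where \<beta>: "I \<beta> = bot"
    using assms(1) by (metis surjD)
  have "seq_true I [FNeg \<phi>, \<phi>] \<beta>"
    using assms(3)[unfolded sound_explosion_def, rule_format, of "[FNeg \<phi>]" \<phi> \<beta>]
    by (simp add: seq_true_singleton)
  then show "sasaki_and (I (FNeg \<phi>)) (I \<phi>) = bot"
    by (simp add: seq_true_pair \<beta> bot_unique)
next
  obtain \<tau> where \<tau>: "I \<tau> = sup (I \<phi>) (I (FNeg \<phi>))"
    using assms(1) by (metis surjD)
  have "seq_true I [\<phi>] \<tau>" and "seq_true I [FNeg \<phi>] \<tau>"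
    by (simp_all add: seq_true_singleton \<tau>)
  then have "seq_true I [] \<tau>"
    using assms(2)[unfolded sound_excluded_middle_def, rule_format, of "[]" \<phi> \<tau>] by simp
  then show "sup (I \<phi>) (I (FNeg \<phi>)) = top"
    by (simp add: seq_true_Nil \<tau>)
qed

theorem proposition3p4:
  fixes I :: "'p form \<Rightarrow> 'a::orthomodular_lattice"
  assumes "surj I"
    and "all_rules_sound I"
  shows "\<forall>\<phi> \<psi>. I (FAnd \<phi> \<psi>) = inf (I \<phi>) (I \<psi>)
              \<and> I (FImp \<phi> \<psi>) = sasaki_imp (I \<phi>) (I \<psi>)
              \<and> I (FNeg \<phi>) = - I \<phi>"
  using assms unfolding all_rules_sound_def
  by (simp add: interp_FAnd interp_FImp interp_FNeg)

end
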